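(* Let $D$ be an infinite integral domain of characteristic different from $2$, and let $\mathbb{O}=(((D,\alpha),\beta),\gamma)$ be the Cayley–Dickson (octonion) algebra over $D$ with its $\mathbb{Z}_2^3$-grading from the Cayley–Dickson process. Then $T_{\mathbb{Z}_2^3}(\mathbb{O})$ is generated, as a graded $T$-ideal, by the identities \begin{align*} [x_1,x_2]=0, &\quad |\langle g(x_1),g(x_2)\rangle|\le 2;\\ x_1\circ x_2=0, &\quad |\langle g(x_1),g(x_2)\rangle|\ge 4;\\ (x_1,x_2,x_3)=0, &\quad |\langle g(x_1),g(x_2),g(x_3)\rangle|\le 4;\\ (x_1x_2)x_3+x_1(x_2x_3)=0, &\quad \langle g(x_1),g(x_2),g(x_3)\rangle=\mathbb{Z}_2^3. \end{align*}
   Context: Cayley–Dickson process: if $A$ is a unital algebra over a commutative ring with an involution $a\mapsto\bar a$ and $\alpha\neq 0$ a scalar, $(A,\alpha)=A\oplus A$ with product $(a_1,a_2)(a_3,a_4)=(a_1a_3+\alpha a_4\bar a_2,\ \bar a_1a_4+a_3a_2)$ and involution $\overline{(a_1,a_2)}=(\bar a_1,-a_2)$. If $A$ is $G$-graded, $(A,\alpha)$ is $G\times\mathbb{Z}_2$-graded by $(A,\alpha)_{(h,0)}=A_h\oplus 0$, $(A,\alpha)_{(h,1)}=0\oplus A_h$. Here $D$ has trivial involution and trivial grading and $\alpha,\beta,\gamma\in D\setminus\{0\}$; groups written additively. Graded identities: $D_G\{X\}$ is the free nonassociative $D$-algebra on variables $x_i^a$ ($a\in G$), graded by $g(x_i^a)=a$,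 $g(uv)=g(u)g(v)$. $f(x_1,\dots,x_n)$ is a graded identity of $A$ if $f(a_1,\dots,a_n)=0$ for all $a_i\in A_{g(x_i)}$; $T_G(A)$ is the set of these. A graded $T$-ideal is an ideal invariant under all graded endomorphisms (variables sent to elements of the same degree). $[x,y]=xy-yx$, $x\circ y=xy+yx$, $(x,y,z)=(xy)z-x(yz)$; $\langle\cdot\rangle$ denotes generated subgroup. *)

theory Defs
  imports Main "HOL-Library.Product_Plus" "HOL-Library.Poly_Mapping"
begin

type_synonym grp = "bool \<times> bool \<times> bool"

definition gadd :: "grp \<Rightarrow> grp \<Rightarrow> grp" where
  "gadd a b = (fst a \<noteq> fst b, fst (snd a) \<noteq> fst (snd b), snd (snd a) \<noteq> snd (snd b))"

definition gzero :: grp where "gzero = (False, False, False)"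

inductive_set gsub :: "grp set \<Rightarrow> grp set" for S :: "grp set" where
  gsub_zero: "gzero \<in> gsub S"
| gsub_gen: "s \<in> S \<Longrightarrow> s \<in> gsub S"
| gsub_add: "a \<in> gsub S \<Longrightarrow> b \<in> gsub S \<Longrightarrow> gadd a b \<in> gsub S"

definition cd_mult :: "('b::plus \<Rightarrow> 'b \<Rightarrow> 'b) \<Rightarrow> ('b \<Rightarrow> 'b) \<Rightarrow> ('s \<Rightarrow> 'b \<Rightarrow> 'b) \<Rightarrow> 's
    \<Rightarrow> 'b \<times> 'b \<Rightarrow> 'b \<times> 'b \<Rightarrow> 'b \<times> 'b" where
  "cd_mult mul cj sm \<alpha> x y =
     (mul (fst x) (fst y) + sm \<alpha> (mul (snd y) (cj (snd x))),
      mul (cj (fst x)) (snd y) + mul (fst y) (snd x))"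

definition cd_conj :: "('b::uminus \<Rightarrow> 'b) \<Rightarrow> 'b \<times> 'b \<Rightarrow> 'b \<times> 'b" where
  "cd_conj cj x = (cj (fst x), - snd x)"

definition cd_smul :: "('s \<Rightarrow> 'b \<Rightarrow> 'b) \<Rightarrow> 's \<Rightarrow> 'b \<times> 'b \<Rightarrow> 'b \<times> 'b" where
  "cd_smul sm c x = (sm c (fst x), sm c (snd x))"

text \<open>Grading of (A,alpha) by G x Z_2 from a G-grading C of A.\<close>
definition cd_comp :: "('g \<Rightarrow> 'b::zero set) \<Rightarrow> 'g \<Rightarrow> bool \<Rightarrow> ('b \<times> 'b) set" where
  "cd_comp C h b = (if b then {(0, a) | a. a \<in> C h} else {(a, 0) | a. a \<in> C h})"

type_synonym 'a oct = "(('a \<times> 'a) \<times> ('a \<times> 'a)) \<times> (('a \<times> 'a) \<times> ('a \<times> 'a))"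

definition mult1 :: "'a::comm_ring_1 \<Rightarrow> 'a \<times> 'a \<Rightarrow> 'a \<times> 'a \<Rightarrow> 'a \<times> 'a" where
  "mult1 \<alpha> = cd_mult (*) id (*) \<alpha>"
definition conj1 :: "'a::comm_ring_1 \<times> 'a \<Rightarrow> 'a \<times> 'a" where "conj1 = cd_conj id"
definition smul1 :: "'a::comm_ring_1 \<Rightarrow> 'a \<times> 'a \<Rightarrow> 'a \<times> 'a" where "smul1 = cd_smul (*)"
definition comp1 :: "bool \<Rightarrow> ('a::comm_ring_1 \<times> 'a) set" where
  "comp1 b = cd_comp (\<lambda>_::unit. UNIV) () b"

definition mult2 :: "'a::comm_ring_1 \<Rightarrow> 'a \<Rightarrow> ('a \<times> 'a) \<times> ('a \<times> 'a) \<Rightarrow> ('a \<times> 'a) \<times> ('a \<times> 'a) \<Rightarrow> ('a \<times> 'a) \<times> ('a \<times> 'a)" where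
  "mult2 \<alpha> \<beta> = cd_mult (mult1 \<alpha>) conj1 smul1 \<beta>"
definition conj2 :: "('a::comm_ring_1 \<times> 'a) \<times> ('a \<times> 'a) \<Rightarrow> ('a \<times> 'a) \<times> ('a \<times> 'a)" where
  "conj2 = cd_conj conj1"
definition smul2 :: "'a::comm_ring_1 \<Rightarrow> ('a \<times> 'a) \<times> ('a \<times> 'a) \<Rightarrow> ('a \<times> 'a) \<times> ('a \<times> 'a)" where
  "smul2 = cd_smul smul1"
definition comp2 :: "bool \<times> bool \<Rightarrow> (('a::comm_ring_1 \<times> 'a) \<times> ('a \<times> 'a)) set" where
  "comp2 h = cd_comp comp1 (fst h) (snd h)"

text \<open>Level 3: the octonion algebra (((D,alpha),beta),gamma), Z_2^3-graded;
  degree (b1,b2,b3): b1 from the alpha-step, b2 from beta, b3 from gamma.\<close>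
definition oct_mult :: "'a::comm_ring_1 \<Rightarrow> 'a \<Rightarrow> 'a \<Rightarrow> 'a oct \<Rightarrow> 'a oct \<Rightarrow> 'a oct" where
  "oct_mult \<alpha> \<beta> \<gamma> = cd_mult (mult2 \<alpha> \<beta>) conj2 smul2 \<gamma>"
definition oct_smul :: "'a::comm_ring_1 \<Rightarrow> 'a oct \<Rightarrow> 'a oct" where
  "oct_smul = cd_smul smul2"
definition oct_comp :: "grp \<Rightarrow> ('a::comm_ring_1) oct set" where
  "oct_comp g = cd_comp comp2 (fst g, fst (snd g)) (snd (snd g))"

datatype mon = Var nat grp | Mul mon mon

fun mdeg :: "mon \<Rightarrow> grp" where
  "mdeg (Var i a) = a"
| "mdeg (Mul u v) = gadd (mdeg u) (mdeg v)"

type_synonym 'a fa = "mon \<Rightarrow>\<^sub>0 'a"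

definition fa_var :: "nat \<Rightarrow> grp \<Rightarrow> 'a::comm_ring_1 fa" where
  "fa_var i a = Poly_Mapping.single (Var i a) 1"

definition fa_smul :: "'a::comm_ring_1 \<Rightarrow> 'a fa \<Rightarrow> 'a fa" where
  "fa_smul c p = (\<Sum>m\<in>Poly_Mapping.keys p. Poly_Mapping.single m (c * Poly_Mapping.lookup p m))"

definition fa_mult :: "'a::comm_ring_1 fa \<Rightarrow> 'a fa \<Rightarrow> 'a fa" where
  "fa_mult p q = (\<Sum>m\<in>Poly_Mapping.keys p. \<Sum>n\<in>Poly_Mapping.keys q. Poly_Mapping.single (Mul m n) (Poly_Mapping.lookup p m * Poly_Mapping.lookup q n))"

definition fa_homog :: "grp \<Rightarrow> 'a::comm_ring_1 fa \<Rightarrow> bool" where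
  "fa_homog g p \<longleftrightarrow> (\<forall>m\<in>Poly_Mapping.keys p. mdeg m = g)"

fun msubst :: "(nat \<Rightarrow> grp \<Rightarrow> 'a::comm_ring_1 fa) \<Rightarrow> mon \<Rightarrow> 'a fa" where
  "msubst \<sigma> (Var i a) = \<sigma> i a"
| "msubst \<sigma> (Mul u v) = fa_mult (msubst \<sigma> u) (msubst \<sigma> v)"

definition fa_subst :: "(nat \<Rightarrow> grp \<Rightarrow> 'a::comm_ring_1 fa) \<Rightarrow> 'a fa \<Rightarrow> 'a fa" where
  "fa_subst \<sigma> p = (\<Sum>m\<in>Poly_Mapping.keys p. fa_smul (Poly_Mapping.lookup p m) (msubst \<sigma> m))"

definition graded_subst :: "(nat \<Rightarrow> grp \<Rightarrow> 'a::comm_ring_1 fa) \<Rightarrow> bool" where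
  "graded_subst \<sigma> \<longleftrightarrow> (\<forall>i a. fa_homog a (\<sigma> i a))"

inductive_set gTideal :: "'a::comm_ring_1 fa set \<Rightarrow> 'a fa set" for S :: "'a fa set" where
  gT_gen: "p \<in> S \<Longrightarrow> p \<in> gTideal S"
| gT_zero: "0 \<in> gTideal S"
| gT_add: "p \<in> gTideal S \<Longrightarrow> q \<in> gTideal S \<Longrightarrow> p + q \<in> gTideal S"
| gT_smul: "p \<in> gTideal S \<Longrightarrow> fa_smul c p \<in> gTideal S"
| gT_multl: "p \<in> gTideal S \<Longrightarrow> fa_mult r p \<in> gTideal S"
| gT_multr: "p \<in> gTideal S \<Longrightarrow> fa_mult p r \<in> gTideal S"
| gT_subst: "p \<in> gTideal S \<Longrightarrow> graded_subst \<sigma> \<Longrightarrow> fa_subst \<sigma> p \<in> gTideal S"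

fun oct_meval :: "'a::comm_ring_1 \<Rightarrow> 'a \<Rightarrow> 'a \<Rightarrow> (nat \<Rightarrow> grp \<Rightarrow> 'a oct) \<Rightarrow> mon \<Rightarrow> 'a oct" where
  "oct_meval \<alpha> \<beta> \<gamma> \<phi> (Var i a) = \<phi> i a"
| "oct_meval \<alpha> \<beta> \<gamma> \<phi> (Mul u v) = oct_mult \<alpha> \<beta> \<gamma> (oct_meval \<alpha> \<beta> \<gamma> \<phi> u) (oct_meval \<alpha> \<beta> \<gamma> \<phi> v)"

definition oct_eval :: "'a::comm_ring_1 \<Rightarrow> 'a \<Rightarrow> 'a \<Rightarrow> (nat \<Rightarrow> grp \<Rightarrow> 'a oct) \<Rightarrow> 'a fa \<Rightarrow> 'a oct" where
  "oct_eval \<alpha> \<beta> \<gamma> \<phi> p = (\<Sum>m\<in>Poly_Mapping.keys p. oct_smul (Poly_Mapping.lookup p m) (oct_meval \<alpha> \<beta> \<gamma> \<phi> m))"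

definition oct_TG :: "'a::comm_ring_1 \<Rightarrow> 'a \<Rightarrow> 'a \<Rightarrow> 'a fa set" where
  "oct_TG \<alpha> \<beta> \<gamma> = {p. \<forall>\<phi>. (\<forall>i a. \<phi> i a \<in> oct_comp a) \<longrightarrow> oct_eval \<alpha> \<beta> \<gamma> \<phi> p = 0}"

definition fa_comm :: "'a::comm_ring_1 fa \<Rightarrow> 'a fa \<Rightarrow> 'a fa" where
  "fa_comm x y = fa_mult x y - fa_mult y x"
definition fa_jordan :: "'a::comm_ring_1 fa \<Rightarrow> 'a fa \<Rightarrow> 'a fa" where
  "fa_jordan x y = fa_mult x y + fa_mult y x"
definition fa_assoc :: "'a::comm_ring_1 fa \<Rightarrow> 'a fa \<Rightarrow> 'a fa \<Rightarrow> 'a fa" where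
  "fa_assoc x y z = fa_mult (fa_mult x y) z - fa_mult x (fa_mult y z)"

definition oct_gens :: "'a::comm_ring_1 fa set" where
  "oct_gens =
     {fa_comm (fa_var 1 a) (fa_var 2 b) | a b. card (gsub {a, b}) \<le> 2}
   \<union> {fa_jordan (fa_var 1 a) (fa_var 2 b) | a b. card (gsub {a, b}) \<ge> 4}
   \<union> {fa_assoc (fa_var 1 a) (fa_var 2 b) (fa_var 3 c) | a b c. card (gsub {a, b, c}) \<le> 4}
   \<union> {fa_mult (fa_mult (fa_var 1 a) (fa_var 2 b)) (fa_var 3 c)
        + fa_mult (fa_var 1 a) (fa_mult (fa_var 2 b) (fa_var 3 c)) | a b c. gsub {a, b, c} = UNIV}"

end

theory Submission
  imports Defs "HOL-Library.Product_Lexorder" "HOL-Library.Multiset" "HOL-Computational_Algebra.Polynomial"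
begin

text \<open>
  The octonions have a basis \<open>e g\<close> (\<open>g \<in> \<int>\<^sub>2\<^sup>3\<close>) of homogeneous elements with
  \<open>e a * e b = c(a,b) e (a + b)\<close>, where \<open>c(a,b)\<close> is \<open>\<plusminus>\<close> a product of \<open>\<alpha>, \<beta>, \<gamma>\<close>.
  The elements \<open>e a, e b\<close> commute when \<open>a, b\<close> generate a subgroup of order at most 2 and
  anticommute otherwise, and \<open>(e a * e b) * e c = \<plusminus> e a * (e b * e c)\<close> with sign \<open>+\<close> exactly
  when \<open>a, b, c\<close> generate a subgroup of order at most 4. Hence the four families are graded
  identities.

  Conversely, the identities let one commute and reassociate factors up to sign, so modulo the
  graded T-ideal they generate every monomial is \<open>\<plusminus>\<close> the right-normed product of its variables
  in sorted order, and a graded identity is congruent to a combination of distinct sorted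
  monomials that is still an identity. Substituting \<open>x\<^sub>i\<^sup>a \<mapsto> t(i,a) e a\<close> with indeterminate
  scalars \<open>t(i,a)\<close>, the coordinates of its value are polynomials in the \<open>t(i,a)\<close> whose
  coefficients are the given ones times nonzero structure constants. Over an infinite domain such
  a polynomial function vanishes only if all its coefficients do, so the combination is zero.
\<close>

lemma gadd_assoc: "gadd (gadd a b) c = gadd a (gadd b c)"
  by (auto simp: gadd_def)

lemma gadd_comm: "gadd a b = gadd b a"
  by (auto simp: gadd_def)

lemma gadd_left_comm: "gadd a (gadd b c) = gadd b (gadd a c)"
  by (auto simp: gadd_def)

lemmas gadd_ac = gadd_assoc gadd_comm gadd_left_comm

lemma gadd_self [simp]: "gadd a a = gzero"
  by (auto simp: gadd_def gzero_def)

lemma gadd_gzero [simp]: "gadd gzero a = a" "gadd a gzero = a"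
  by (auto simp: gadd_def gzero_def)

lemma gadd_cancel_left [simp]: "gadd a (gadd a b) = b"
  by (cases a rule: prod_cases3; cases b rule: prod_cases3) (auto simp: gadd_def)

lemma all_grp_eq: "(\<forall>a::grp. P a) \<longleftrightarrow> (\<forall>x y z. P (x, y, z))"
  by auto

lemma card_UNIV_grp: "card (UNIV :: grp set) = 8"
  by (simp add: UNIV_Times_UNIV[symmetric] card_cartesian_product del: UNIV_Times_UNIV)

lemma gsub_pair: "gsub {a, b} = {gzero, a, b, gadd a b}"
proof
  show "gsub {a, b} \<subseteq> {gzero, a, b, gadd a b}"
  proof
    fix x assume "x \<in> gsub {a, b}"
    then show "x \<in> {gzero, a, b, gadd a b}"
      by induction (auto simp: gadd_ac)
  qed
  show "{gzero, a, b, gadd a b} \<subseteq> gsub {a, b}"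
    by (auto intro: gsub.intros)
qed

lemma gsub_triple:
  "gsub {a, b, c} = {gzero, a, b, c, gadd a b, gadd a c, gadd b c, gadd (gadd a b) c}"
proof
  show "gsub {a, b, c} \<subseteq> {gzero, a, b, c, gadd a b, gadd a c, gadd b c, gadd (gadd a b) c}"
  proof
    fix x assume "x \<in> gsub {a, b, c}"
    then show "x \<in> {gzero, a, b, c, gadd a b, gadd a c, gadd b c, gadd (gadd a b) c}"
      by induction (auto simp: gadd_ac)
  qed
  show "{gzero, a, b, c, gadd a b, gadd a c, gadd b c, gadd (gadd a b) c} \<subseteq> gsub {a, b, c}"
    by (auto intro: gsub.intros)
qed

definition gdependent2 :: "grp \<Rightarrow> grp \<Rightarrow> bool" where
  "gdependent2 a b \<longleftrightarrow> a = gzero \<or> b = gzero \<or> a = b"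

definition gdependent3 :: "grp \<Rightarrow> grp \<Rightarrow> grp \<Rightarrow> bool" where
  "gdependent3 a b c \<longleftrightarrow> a = gzero \<or> b = gzero \<or> c = gzero \<or> a = b \<or> a = c \<or> b = c \<or> gadd a b = c"

lemma card_gsub_pair:
  "card (gsub {a, b}) \<le> 2 \<longleftrightarrow> gdependent2 a b"
  "4 \<le> card (gsub {a, b}) \<longleftrightarrow> \<not> gdependent2 a b"
proof -
  have "\<forall>a b. (card {gzero, a, b, gadd a b} \<le> 2 \<longleftrightarrow> gdependent2 a b) \<and>
               (4 \<le> card {gzero, a, b, gadd a b} \<longleftrightarrow> \<not> gdependent2 a b)"
    unfolding all_grp_eq all_bool_eq by (simp add: gdependent2_def gzero_def gadd_def card_insert_if)
  from this[rule_format, of a b] show "card (gsub {a, b}) \<le> 2 \<longleftrightarrow> gdependent2 a b"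
    "4 \<le> card (gsub {a, b}) \<longleftrightarrow> \<not> gdependent2 a b"
    by (simp_all add: gsub_pair)
qed

lemma card_gsub_triple:
  "card (gsub {a, b, c}) \<le> 4 \<longleftrightarrow> gdependent3 a b c"
  "card (gsub {a, b, c}) = 8 \<longleftrightarrow> \<not> gdependent3 a b c"
proof -
  let ?S = "\<lambda>a b c. {gzero, a, b, c, gadd a b, gadd a c, gadd b c, gadd (gadd a b) c}"
  have "\<forall>a b c. (card (?S a b c) \<le> 4 \<longleftrightarrow> gdependent3 a b c) \<and>
                 (card (?S a b c) = 8 \<longleftrightarrow> \<not> gdependent3 a b c)"
    unfolding all_grp_eq all_bool_eq by (simp add: gdependent3_def gzero_def gadd_def card_insert_if)
  from this[rule_format, of a b c] show "card (gsub {a, b, c}) \<le> 4 \<longleftrightarrow> gdependent3 a b c"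
    "card (gsub {a, b, c}) = 8 \<longleftrightarrow> \<not> gdependent3 a b c"
    by (simp_all add: gsub_triple)
qed

lemma gsub_triple_eq_UNIV: "gsub {a, b, c} = UNIV \<longleftrightarrow> \<not> gdependent3 a b c"
  by (metis card_UNIV_grp card_gsub_triple(2) card_subset_eq finite top_greatest)

section \<open>The multiplication table of the octonions\<close>

text \<open>\<open>e a * e b = \<plusminus> \<alpha>^(a\<^sub>1 b\<^sub>1) \<beta>^(a\<^sub>2 b\<^sub>2) \<gamma>^(a\<^sub>3 b\<^sub>3) e (a + b)\<close>; 
  \<open>oct_neg a b\<close> is the sign, obtained by unfolding the Cayley--Dickson product three times.\<close>

definition oct_neg :: "grp \<Rightarrow> grp \<Rightarrow> bool" where
  "oct_neg a b = (case a of (a1, a2, a3) \<Rightarrow> case b of (b1, b2, b3) \<Rightarrow>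
     (a2 \<and> b3) \<noteq> ((a2 \<and> a3 \<and> b1) \<noteq> ((a1 \<and> b3) \<noteq> ((a1 \<and> b2) \<noteq> ((a1 \<and> a3 \<and> b2) \<noteq> (a1 \<and> a2 \<and> b3))))))"

definition oct_weight :: "'a::comm_ring_1 \<Rightarrow> 'a \<Rightarrow> 'a \<Rightarrow> grp \<Rightarrow> grp \<Rightarrow> 'a" where
  "oct_weight \<alpha> \<beta> \<gamma> a b =
     (if fst a \<and> fst b then \<alpha> else 1) * (if fst (snd a) \<and> fst (snd b) then \<beta> else 1) *
     (if snd (snd a) \<and> snd (snd b) then \<gamma> else 1)"

definition oct_const :: "'a::comm_ring_1 \<Rightarrow> 'a \<Rightarrow> 'a \<Rightarrow> grp \<Rightarrow> grp \<Rightarrow> 'a" where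
  "oct_const \<alpha> \<beta> \<gamma> a b = (if oct_neg a b then -1 else 1) * oct_weight \<alpha> \<beta> \<gamma> a b"

definition basis1 :: "bool \<Rightarrow> 'a::comm_ring_1 \<times> 'a" where
  "basis1 b = (if b then (0, 1) else (1, 0))"

definition basis2 :: "bool \<times> bool \<Rightarrow> ('a::comm_ring_1 \<times> 'a) \<times> ('a \<times> 'a)" where
  "basis2 b = (if snd b then (0, basis1 (fst b)) else (basis1 (fst b), 0))"

definition oct_basis :: "grp \<Rightarrow> 'a::comm_ring_1 oct" where
  "oct_basis g = (if snd (snd g) then (0, basis2 (fst g, fst (snd g))) else (basis2 (fst g, fst (snd g)), 0))"

lemmas oct_defs = oct_mult_def mult2_def Defs.mult1_def cd_mult_def conj2_def conj1_def cd_conj_def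
  smul2_def smul1_def cd_smul_def oct_smul_def

lemma oct_basis_mult:
  "oct_mult \<alpha> \<beta> \<gamma> (oct_basis a) (oct_basis b) = oct_smul (oct_const \<alpha> \<beta> \<gamma> a b) (oct_basis (gadd a b))"
  by (cases a; cases b)
     (auto simp: oct_defs oct_basis_def basis2_def basis1_def oct_const_def oct_weight_def oct_neg_def gadd_def)

lemma oct_comp_iff: "x \<in> oct_comp a \<longleftrightarrow> (\<exists>t. x = oct_smul t (oct_basis a :: 'a::comm_ring_1 oct))"
  by (cases a rule: prod_cases3)
     (auto simp: oct_comp_def cd_comp_def comp2_def comp1_def oct_basis_def basis2_def basis1_def
        oct_defs prod_eq_iff)

lemma oct_neg_comm: "oct_neg a b = oct_neg b a \<longleftrightarrow> gdependent2 a b"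
proof -
  have "\<forall>a b. oct_neg a b = oct_neg b a \<longleftrightarrow> gdependent2 a b"
    unfolding all_grp_eq all_bool_eq by (simp add: oct_neg_def gdependent2_def gzero_def)
  then show ?thesis by blast
qed

lemma oct_neg_assoc:
  "(oct_neg a b \<noteq> oct_neg (gadd a b) c) = (oct_neg b c \<noteq> oct_neg a (gadd b c)) \<longleftrightarrow> gdependent3 a b c"
proof -
  have "\<forall>a b c. (oct_neg a b \<noteq> oct_neg (gadd a b) c) = (oct_neg b c \<noteq> oct_neg a (gadd b c))
                  \<longleftrightarrow> gdependent3 a b c"
    unfolding all_grp_eq all_bool_eq by (simp add: oct_neg_def gdependent3_def gzero_def gadd_def)
  then show ?thesis by blast
qed

lemma oct_weight_comm: "oct_weight \<alpha> \<beta> \<gamma> a b = oct_weight \<alpha> \<beta> \<gamma> b a"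
  by (simp add: oct_weight_def conj_commute)

lemma oct_weight_cocycle:
  "oct_weight \<alpha> \<beta> \<gamma> a b * oct_weight \<alpha> \<beta> \<gamma> (gadd a b) c =
   oct_weight \<alpha> \<beta> \<gamma> b c * oct_weight \<alpha> \<beta> \<gamma> a (gadd b c)"
proof -
  have factor: "(if x \<and> y then k else 1) * (if (x \<noteq> y) \<and> z then k else 1) =
      (if y \<and> z then k else 1) * (if x \<and> (y \<noteq> z) then k else 1)" for x y z and k :: 'a
    by (cases x; cases y; cases z; simp)
  show ?thesis
    unfolding oct_weight_def gadd_def fst_conv snd_conv
    using factor[where k = \<alpha>] factor[where k = \<beta>] factor[where k = \<gamma>]
    by (simp add: mult_ac)
qed

lemma oct_const_comm:
  "oct_const \<alpha> \<beta> \<gamma> b a = (if gdependent2 a b then 1 else -1) * oct_const \<alpha> \<beta> \<gamma> a b"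
  using oct_neg_comm[of a b] by (auto simp: oct_const_def oct_weight_comm)

lemma oct_const_assoc:
  "oct_const \<alpha> \<beta> \<gamma> a b * oct_const \<alpha> \<beta> \<gamma> (gadd a b) c =
   (if gdependent3 a b c then 1 else -1) * (oct_const \<alpha> \<beta> \<gamma> b c * oct_const \<alpha> \<beta> \<gamma> a (gadd b c))"
  using oct_neg_assoc[of a b c] oct_weight_cocycle[of \<alpha> \<beta> \<gamma> a b c]
  by (auto simp: oct_const_def algebra_simps)

lemma oct_const_nonzero:
  "\<alpha> \<noteq> 0 \<Longrightarrow> \<beta> \<noteq> 0 \<Longrightarrow> \<gamma> \<noteq> 0 \<Longrightarrow> oct_const \<alpha> \<beta> \<gamma> a b \<noteq> (0::'a::idom)"
  by (simp add: oct_const_def oct_weight_def)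


lemma oct_smul_add_right: "oct_smul c (x + y) = oct_smul c x + oct_smul c (y::'a::comm_ring_1 oct)"
  by (simp add: oct_defs prod_eq_iff algebra_simps)

lemma oct_smul_add_left: "oct_smul (a + b) x = oct_smul a x + oct_smul b (x::'a::comm_ring_1 oct)"
  by (simp add: oct_defs prod_eq_iff algebra_simps)

lemma oct_smul_zero [simp]: "oct_smul c (0::'a::comm_ring_1 oct) = 0"
  by (simp add: oct_defs prod_eq_iff)

lemma oct_smul_0 [simp]: "oct_smul 0 (x::'a::comm_ring_1 oct) = 0"
  by (simp add: oct_defs prod_eq_iff)

lemma oct_smul_1 [simp]: "oct_smul 1 (x::'a::comm_ring_1 oct) = x"
  by (simp add: oct_defs prod_eq_iff)

lemma oct_smul_smul: "oct_smul a (oct_smul b x) = oct_smul (a * b) (x::'a::comm_ring_1 oct)"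
  by (simp add: oct_defs prod_eq_iff algebra_simps)

lemma oct_smul_uminus: "oct_smul c (- x) = - oct_smul c (x::'a::comm_ring_1 oct)"
  by (simp add: oct_defs prod_eq_iff algebra_simps)

lemma oct_smul_minus_one: "oct_smul (-1) x = - (x::'a::comm_ring_1 oct)"
  by (simp add: oct_defs prod_eq_iff algebra_simps)

lemma oct_smul_sum: "oct_smul c (\<Sum>i\<in>A. f i) = (\<Sum>i\<in>A. oct_smul c (f i :: 'a::comm_ring_1 oct))"
  by (induction A rule: infinite_finite_induct) (auto simp: oct_smul_add_right)

lemma oct_mult_add_left:
  "oct_mult \<alpha> \<beta> \<gamma> (x + y) z = oct_mult \<alpha> \<beta> \<gamma> x z + oct_mult \<alpha> \<beta> \<gamma> y (z::'a::comm_ring_1 oct)"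
  by (simp add: oct_defs prod_eq_iff algebra_simps)

lemma oct_mult_add_right:
  "oct_mult \<alpha> \<beta> \<gamma> z (x + y) = oct_mult \<alpha> \<beta> \<gamma> z x + oct_mult \<alpha> \<beta> \<gamma> z (y::'a::comm_ring_1 oct)"
  by (simp add: oct_defs prod_eq_iff algebra_simps)

lemma oct_mult_zero [simp]:
  "oct_mult \<alpha> \<beta> \<gamma> 0 (z::'a::comm_ring_1 oct) = 0" "oct_mult \<alpha> \<beta> \<gamma> z (0::'a::comm_ring_1 oct) = 0"
  by (simp_all add: oct_defs prod_eq_iff)

lemma oct_mult_smul_left:
  "oct_mult \<alpha> \<beta> \<gamma> (oct_smul c x) z = oct_smul c (oct_mult \<alpha> \<beta> \<gamma> x (z::'a::comm_ring_1 oct))"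
  by (simp add: oct_defs prod_eq_iff algebra_simps)

lemma oct_mult_smul_right:
  "oct_mult \<alpha> \<beta> \<gamma> z (oct_smul c x) = oct_smul c (oct_mult \<alpha> \<beta> \<gamma> z (x::'a::comm_ring_1 oct))"
  by (simp add: oct_defs prod_eq_iff algebra_simps)

lemma oct_mult_smul:
  "oct_mult \<alpha> \<beta> \<gamma> (oct_smul s x) (oct_smul t y) = oct_smul (s * t) (oct_mult \<alpha> \<beta> \<gamma> x (y::'a::comm_ring_1 oct))"
  by (simp add: oct_mult_smul_left oct_mult_smul_right oct_smul_smul mult.commute)

lemma oct_mult_sum_left:
  "oct_mult \<alpha> \<beta> \<gamma> (\<Sum>i\<in>A. f i) z = (\<Sum>i\<in>A. oct_mult \<alpha> \<beta> \<gamma> (f i) (z::'a::comm_ring_1 oct))"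
  by (induction A rule: infinite_finite_induct) (auto simp: oct_mult_add_left)

lemma oct_mult_sum_right:
  "oct_mult \<alpha> \<beta> \<gamma> z (\<Sum>i\<in>A. f i) = (\<Sum>i\<in>A. oct_mult \<alpha> \<beta> \<gamma> z (f i :: 'a::comm_ring_1 oct))"
  by (induction A rule: infinite_finite_induct) (auto simp: oct_mult_add_right)

abbreviation keys :: "('b \<Rightarrow>\<^sub>0 'a::zero) \<Rightarrow> 'b set" where
  "keys \<equiv> Poly_Mapping.keys"

abbreviation lookup :: "('b \<Rightarrow>\<^sub>0 'a::zero) \<Rightarrow> 'b \<Rightarrow> 'a" where
  "lookup \<equiv> Poly_Mapping.lookup"

lemma sum_keys_superset:
  assumes "finite S" "keys p \<subseteq> S" "\<And>m. F m 0 = (0::'b::comm_monoid_add)"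
  shows "(\<Sum>m\<in>keys p. F m (lookup p m)) = (\<Sum>m\<in>S. F m (lookup p m))"
  by (rule sum.mono_neutral_left) (use assms in \<open>auto simp: in_keys_iff\<close>)

lemma sum_single_lookup: "(\<Sum>m\<in>keys p. Poly_Mapping.single m (lookup p m)) = p"
proof (rule poly_mapping_eqI)
  fix k
  show "lookup (\<Sum>m\<in>keys p. Poly_Mapping.single m (lookup p m)) k = lookup p k"
    by (cases "k \<in> keys p") (auto simp: lookup_sum lookup_single when_def in_keys_iff)
qed

lemma lookup_fa_smul [simp]: "lookup (fa_smul c p) n = c * lookup (p::'a::comm_ring_1 fa) n"
proof -
  have "lookup (fa_smul c p) n = (\<Sum>m\<in>keys p. (c * lookup p m when m = n))"
    by (simp add: fa_smul_def lookup_sum lookup_single)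
  also have "\<dots> = c * lookup p n"
    by (cases "n \<in> keys p") (auto simp: when_def in_keys_iff)
  finally show ?thesis .
qed

lemma fa_smul_add_right: "fa_smul c (p + q) = fa_smul c p + fa_smul c (q::'a::comm_ring_1 fa)"
  by (rule poly_mapping_eqI) (simp add: lookup_add algebra_simps)

lemma fa_smul_diff_right: "fa_smul c (p - q) = fa_smul c p - fa_smul c (q::'a::comm_ring_1 fa)"
  by (rule poly_mapping_eqI) (simp add: lookup_minus algebra_simps)

lemma fa_smul_add_left: "fa_smul (a + b) q = fa_smul a q + fa_smul b (q::'a::comm_ring_1 fa)"
  by (rule poly_mapping_eqI) (simp add: lookup_add algebra_simps)

lemma fa_smul_diff_left: "fa_smul (a - b) q = fa_smul a q - fa_smul b (q::'a::comm_ring_1 fa)"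
  by (rule poly_mapping_eqI) (simp add: lookup_minus algebra_simps)

lemma fa_smul_1 [simp]: "fa_smul 1 p = (p::'a::comm_ring_1 fa)"
  by (rule poly_mapping_eqI) simp

lemma fa_smul_0 [simp]: "fa_smul 0 p = (0::'a::comm_ring_1 fa)"
  by (rule poly_mapping_eqI) simp

lemma fa_smul_single: "fa_smul c (Poly_Mapping.single m a) = Poly_Mapping.single m (c * (a::'a::comm_ring_1))"
  by (rule poly_mapping_eqI) (simp add: lookup_single when_def)

lemma fa_mult_superset:
  assumes "finite S" "keys p \<subseteq> S" "finite T" "keys q \<subseteq> T"
  shows "fa_mult p q =
    (\<Sum>m\<in>S. \<Sum>n\<in>T. Poly_Mapping.single (Mul m n) (lookup p m * lookup (q::'a::comm_ring_1 fa) n))"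
proof -
  have "fa_mult p q = (\<Sum>m\<in>keys p. \<Sum>n\<in>T. Poly_Mapping.single (Mul m n) (lookup p m * lookup q n))"
    unfolding fa_mult_def
    by (intro sum.cong refl sum_keys_superset[where F = "\<lambda>n c. Poly_Mapping.single (Mul _ n) (_ * c)"])
       (use assms in auto)
  also have "\<dots> = (\<Sum>m\<in>S. \<Sum>n\<in>T. Poly_Mapping.single (Mul m n) (lookup p m * lookup q n))"
    by (rule sum_keys_superset[where F = "\<lambda>m c. \<Sum>n\<in>T. Poly_Mapping.single (Mul m n) (c * lookup q n)"])
       (use assms in auto)
  finally show ?thesis .
qed

lemma fa_mult_add_left: "fa_mult (p1 + p2) q = fa_mult p1 q + fa_mult p2 (q::'a::comm_ring_1 fa)"
  using keys_add[of p1 p2]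
  by (simp add: fa_mult_superset[of "keys p1 \<union> keys p2" _ "keys q"] lookup_add algebra_simps
      single_add sum.distrib)

lemma fa_mult_add_right: "fa_mult q (p1 + p2) = fa_mult q p1 + fa_mult q (p2::'a::comm_ring_1 fa)"
  using keys_add[of p1 p2]
  by (simp add: fa_mult_superset[of "keys q" _ "keys p1 \<union> keys p2"] lookup_add algebra_simps
      single_add sum.distrib)

lemma fa_mult_diff_left: "fa_mult (p1 - p2) q = fa_mult p1 q - fa_mult p2 (q::'a::comm_ring_1 fa)"
  by (metis add_diff_cancel diff_add_cancel fa_mult_add_left)

lemma fa_mult_diff_right: "fa_mult q (p1 - p2) = fa_mult q p1 - fa_mult q (p2::'a::comm_ring_1 fa)"
  by (metis add_diff_cancel diff_add_cancel fa_mult_add_right)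

lemma fa_mult_single:
  "fa_mult (Poly_Mapping.single m a) (Poly_Mapping.single n b) = Poly_Mapping.single (Mul m n) (a * (b::'a::comm_ring_1))"
  by (simp add: fa_mult_superset[of "{m}" _ "{n}"])

lemma fa_subst_superset:
  assumes "finite S" "keys p \<subseteq> S"
  shows "fa_subst \<sigma> p = (\<Sum>m\<in>S. fa_smul (lookup p m) (msubst \<sigma> m :: 'a::comm_ring_1 fa))"
  unfolding fa_subst_def
  by (rule sum_keys_superset[where F = "\<lambda>m c. fa_smul c (msubst \<sigma> m)"]) (use assms in auto)

lemma fa_subst_add: "fa_subst \<sigma> (p + q) = fa_subst \<sigma> p + fa_subst \<sigma> (q::'a::comm_ring_1 fa)"
  using keys_add[of p q]
  by (simp add: fa_subst_superset[of "keys p \<union> keys q"] lookup_add sum.distrib fa_smul_add_left)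

lemma fa_subst_diff: "fa_subst \<sigma> (p - q) = fa_subst \<sigma> p - fa_subst \<sigma> (q::'a::comm_ring_1 fa)"
  using keys_diff[of p q]
  by (simp add: fa_subst_superset[of "keys p \<union> keys q"] lookup_minus sum_subtractf fa_smul_diff_left)

lemma fa_subst_single: "fa_subst \<sigma> (Poly_Mapping.single m c) = fa_smul c (msubst \<sigma> m :: 'a::comm_ring_1 fa)"
  by (simp add: fa_subst_superset[of "{m}"])

lemma oct_eval_superset:
  assumes "finite S" "keys p \<subseteq> S"
  shows "oct_eval \<alpha> \<beta> \<gamma> \<phi> p = (\<Sum>m\<in>S. oct_smul (lookup p m) (oct_meval \<alpha> \<beta> \<gamma> \<phi> m :: 'a::comm_ring_1 oct))"
  unfolding oct_eval_def
  by (rule sum_keys_superset[where F = "\<lambda>m c. oct_smul c (oct_meval \<alpha> \<beta> \<gamma> \<phi> m)"]) (use assms in auto)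

lemma oct_eval_zero [simp]: "oct_eval \<alpha> \<beta> \<gamma> \<phi> (0::'a::comm_ring_1 fa) = 0"
  by (simp add: oct_eval_def)

lemma oct_eval_add:
  "oct_eval \<alpha> \<beta> \<gamma> \<phi> (p + q) = oct_eval \<alpha> \<beta> \<gamma> \<phi> p + oct_eval \<alpha> \<beta> \<gamma> \<phi> (q::'a::comm_ring_1 fa)"
  using keys_add[of p q]
  by (simp add: oct_eval_superset[of "keys p \<union> keys q"] lookup_add sum.distrib oct_smul_add_left)

lemma oct_eval_diff:
  "oct_eval \<alpha> \<beta> \<gamma> \<phi> (p - q) = oct_eval \<alpha> \<beta> \<gamma> \<phi> p - oct_eval \<alpha> \<beta> \<gamma> \<phi> (q::'a::comm_ring_1 fa)"
  by (metis add_diff_cancel diff_add_cancel oct_eval_add)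

lemma oct_eval_smul:
  "oct_eval \<alpha> \<beta> \<gamma> \<phi> (fa_smul c p) = oct_smul c (oct_eval \<alpha> \<beta> \<gamma> \<phi> (p::'a::comm_ring_1 fa))"
proof -
  have "keys (fa_smul c p) \<subseteq> keys p"
    by (auto simp: in_keys_iff)
  then show ?thesis
    by (simp add: oct_eval_superset[of "keys p"] oct_smul_sum oct_smul_smul)
qed

lemma oct_eval_single:
  "oct_eval \<alpha> \<beta> \<gamma> \<phi> (Poly_Mapping.single m c) = oct_smul c (oct_meval \<alpha> \<beta> \<gamma> \<phi> m :: 'a::comm_ring_1 oct)"
  by (simp add: oct_eval_superset[of "{m}"])

lemma oct_eval_var [simp]: "oct_eval \<alpha> \<beta> \<gamma> \<phi> (fa_var i a) = (\<phi> i a :: 'a::comm_ring_1 oct)"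
  by (simp add: fa_var_def oct_eval_single)

lemma oct_eval_sum:
  "oct_eval \<alpha> \<beta> \<gamma> \<phi> (\<Sum>i\<in>A. f i) = (\<Sum>i\<in>A. oct_eval \<alpha> \<beta> \<gamma> \<phi> (f i :: 'a::comm_ring_1 fa))"
  by (induction A rule: infinite_finite_induct) (auto simp: oct_eval_add)

lemma oct_eval_mult:
  "oct_eval \<alpha> \<beta> \<gamma> \<phi> (fa_mult p q) =
   oct_mult \<alpha> \<beta> \<gamma> (oct_eval \<alpha> \<beta> \<gamma> \<phi> p) (oct_eval \<alpha> \<beta> \<gamma> \<phi> (q::'a::comm_ring_1 fa))"
proof -
  have "oct_eval \<alpha> \<beta> \<gamma> \<phi> (fa_mult p q) = (\<Sum>m\<in>keys p. \<Sum>n\<in>keys q.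
      oct_smul (lookup p m * lookup q n) (oct_mult \<alpha> \<beta> \<gamma> (oct_meval \<alpha> \<beta> \<gamma> \<phi> m) (oct_meval \<alpha> \<beta> \<gamma> \<phi> n)))"
    unfolding fa_mult_def oct_eval_sum oct_eval_single by simp
  also have "\<dots> = oct_mult \<alpha> \<beta> \<gamma> (oct_eval \<alpha> \<beta> \<gamma> \<phi> p) (oct_eval \<alpha> \<beta> \<gamma> \<phi> q)"
    unfolding oct_eval_def oct_mult_sum_left oct_mult_sum_right oct_mult_smul_left oct_mult_smul_right
      oct_smul_smul
    by (subst sum.swap) (simp add: oct_smul_sum oct_smul_smul mult.commute)
  finally show ?thesis .
qed

lemma oct_eval_msubst:
  "oct_eval \<alpha> \<beta> \<gamma> \<phi> (msubst \<sigma> m) = oct_meval \<alpha> \<beta> \<gamma> (\<lambda>i a. oct_eval \<alpha> \<beta> \<gamma> \<phi> (\<sigma> i a :: 'a::comm_ring_1 fa)) m"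
  by (induction m) (simp_all add: oct_eval_mult)

lemma oct_eval_subst:
  "oct_eval \<alpha> \<beta> \<gamma> \<phi> (fa_subst \<sigma> p) = oct_eval \<alpha> \<beta> \<gamma> (\<lambda>i a. oct_eval \<alpha> \<beta> \<gamma> \<phi> (\<sigma> i a :: 'a::comm_ring_1 fa)) p"
  unfolding fa_subst_def oct_eval_sum oct_eval_smul oct_eval_msubst
  by (simp add: oct_eval_def)

lemma oct_comp_mult:
  "x \<in> oct_comp a \<Longrightarrow> y \<in> oct_comp b \<Longrightarrow> oct_mult \<alpha> \<beta> \<gamma> x (y::'a::comm_ring_1 oct) \<in> oct_comp (gadd a b)"
  by (auto simp: oct_comp_iff oct_mult_smul oct_basis_mult oct_smul_smul)

lemma oct_comp_zero: "(0::'a::comm_ring_1 oct) \<in> oct_comp a"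
  by (auto simp: oct_comp_iff intro: exI[of _ 0])

lemma oct_comp_add: "x \<in> oct_comp a \<Longrightarrow> y \<in> oct_comp a \<Longrightarrow> x + (y::'a::comm_ring_1 oct) \<in> oct_comp a"
  by (auto simp: oct_comp_iff oct_smul_add_left[symmetric])

lemma oct_comp_sum:
  "(\<And>i. i \<in> A \<Longrightarrow> f i \<in> oct_comp a) \<Longrightarrow> (\<Sum>i\<in>A. f i :: 'a::comm_ring_1 oct) \<in> oct_comp a"
  by (induction A rule: infinite_finite_induct) (auto intro: oct_comp_add oct_comp_zero)

lemma oct_meval_comp: "\<forall>i a. \<phi> i a \<in> oct_comp a \<Longrightarrow> oct_meval \<alpha> \<beta> \<gamma> \<phi> m \<in> oct_comp (mdeg m)"
  by (induction m) (auto intro: oct_comp_mult)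

lemma oct_eval_comp:
  assumes "\<forall>i a. \<phi> i a \<in> oct_comp a" and "fa_homog g p"
  shows "oct_eval \<alpha> \<beta> \<gamma> \<phi> (p::'a::comm_ring_1 fa) \<in> oct_comp g"
  unfolding oct_eval_def
proof (rule oct_comp_sum)
  fix m assume "m \<in> keys p"
  then have "oct_meval \<alpha> \<beta> \<gamma> \<phi> m \<in> oct_comp g"
    using assms oct_meval_comp unfolding fa_homog_def by metis
  then show "oct_smul (lookup p m) (oct_meval \<alpha> \<beta> \<gamma> \<phi> m) \<in> oct_comp g"
    by (auto simp: oct_comp_iff oct_smul_smul)
qed


section \<open>Soundness: the generators are graded identities\<close>

lemma oct_basis_comm:
  "oct_mult \<alpha> \<beta> \<gamma> (oct_basis b) (oct_basis a) =
   oct_smul (if gdependent2 a b then 1 else -1) (oct_mult \<alpha> \<beta> \<gamma> (oct_basis a) (oct_basis b) :: 'a::comm_ring_1 oct)"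
  by (simp add: oct_basis_mult oct_const_comm[where a = a and b = b] gadd_comm oct_smul_smul)

lemma oct_basis_assoc:
  "oct_mult \<alpha> \<beta> \<gamma> (oct_mult \<alpha> \<beta> \<gamma> (oct_basis a) (oct_basis b)) (oct_basis c) =
   oct_smul (if gdependent3 a b c then 1 else -1)
     (oct_mult \<alpha> \<beta> \<gamma> (oct_basis a) (oct_mult \<alpha> \<beta> \<gamma> (oct_basis b) (oct_basis c)) :: 'a::comm_ring_1 oct)"
  by (simp add: oct_basis_mult oct_mult_smul_left oct_mult_smul_right oct_smul_smul
      oct_const_assoc[of \<alpha> \<beta> \<gamma> a b c] gadd_assoc mult_ac)

lemma oct_gens_identities:
  assumes "p \<in> oct_gens"
  shows "(p::'a::comm_ring_1 fa) \<in> oct_TG \<alpha> \<beta> \<gamma>"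
  unfolding oct_TG_def
proof (intro CollectI allI impI)
  fix \<phi> :: "nat \<Rightarrow> grp \<Rightarrow> 'a oct"
  assume "\<forall>i a. \<phi> i a \<in> oct_comp a"
  then obtain t where \<phi>: "\<phi> i a = oct_smul (t i a) (oct_basis a)" for i a
    unfolding oct_comp_iff by metis
  from assms show "oct_eval \<alpha> \<beta> \<gamma> \<phi> p = 0"
    unfolding oct_gens_def
  proof (elim UnE CollectE exE conjE)
    fix a b assume "p = fa_comm (fa_var 1 a) (fa_var 2 b)" "card (gsub {a, b}) \<le> 2"
    then show ?thesis
      by (simp add: \<phi> fa_comm_def oct_eval_diff oct_eval_mult oct_mult_smul card_gsub_pair
          oct_basis_comm[where a = a and b = b] mult.commute)
  next
    fix a b assume "p = fa_jordan (fa_var 1 a) (fa_var 2 b)" "4 \<le> card (gsub {a, b})"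
    then show ?thesis
      by (simp add: \<phi> fa_jordan_def oct_eval_add oct_eval_mult oct_mult_smul card_gsub_pair
          oct_basis_comm[where a = a and b = b] mult.commute oct_smul_smul oct_smul_minus_one oct_smul_uminus)
  next
    fix a b c assume "p = fa_assoc (fa_var 1 a) (fa_var 2 b) (fa_var 3 c)" "card (gsub {a, b, c}) \<le> 4"
    then show ?thesis
      by (simp add: \<phi> fa_assoc_def oct_eval_diff oct_eval_mult oct_mult_smul card_gsub_triple
          oct_basis_assoc[of \<alpha> \<beta> \<gamma> a b c] mult_ac)
  next
    fix a b c
    assume "p = fa_mult (fa_mult (fa_var 1 a) (fa_var 2 b)) (fa_var 3 c)
              + fa_mult (fa_var 1 a) (fa_mult (fa_var 2 b) (fa_var 3 c))"
      and "gsub {a, b, c} = UNIV"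
    then show ?thesis
      by (simp add: \<phi> oct_eval_add oct_eval_mult oct_mult_smul gsub_triple_eq_UNIV
          oct_basis_assoc[of \<alpha> \<beta> \<gamma> a b c] mult_ac oct_smul_minus_one oct_smul_uminus)
  qed
qed

lemma oct_TG_subst:
  assumes "p \<in> oct_TG \<alpha> \<beta> \<gamma>" and "graded_subst \<sigma>"
  shows "fa_subst \<sigma> (p::'a::comm_ring_1 fa) \<in> oct_TG \<alpha> \<beta> \<gamma>"
  unfolding oct_TG_def
proof (intro CollectI allI impI)
  fix \<phi> :: "nat \<Rightarrow> grp \<Rightarrow> 'a oct"
  assume "\<forall>i a. \<phi> i a \<in> oct_comp a"
  then have "\<forall>i a. oct_eval \<alpha> \<beta> \<gamma> \<phi> (\<sigma> i a) \<in> oct_comp a"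
    using assms(2) by (auto simp: graded_subst_def intro!: oct_eval_comp)
  then show "oct_eval \<alpha> \<beta> \<gamma> \<phi> (fa_subst \<sigma> p) = 0"
    using assms(1) by (simp add: oct_TG_def oct_eval_subst)
qed

lemma gTideal_oct_gens_subset: "gTideal oct_gens \<subseteq> (oct_TG \<alpha> \<beta> \<gamma> :: 'a::comm_ring_1 fa set)"
proof
  fix p :: "'a fa"
  assume "p \<in> gTideal oct_gens"
  then show "p \<in> oct_TG \<alpha> \<beta> \<gamma>"
  proof induction
    case (gT_gen p)
    then show ?case by (rule oct_gens_identities)
  next
    case (gT_subst p \<sigma>)
    then show ?case by (simp add: oct_TG_subst)
  qed (simp_all add: oct_TG_def oct_eval_add oct_eval_smul oct_eval_mult)
qed

section \<open>Monomials up to sign modulo the T-ideal\<close>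

abbreviation fa_mon :: "mon \<Rightarrow> 'a::comm_ring_1 \<Rightarrow> 'a fa" where
  "fa_mon m c \<equiv> Poly_Mapping.single m c"

lemma gTideal_sum: "(\<And>i. i \<in> A \<Longrightarrow> f i \<in> gTideal S) \<Longrightarrow> (\<Sum>i\<in>A. f i) \<in> gTideal S"
  by (induction A rule: infinite_finite_induct) (auto intro: gT_zero gT_add)

definition sign_equiv :: "'a::comm_ring_1 fa set \<Rightarrow> mon \<Rightarrow> mon \<Rightarrow> bool" where
  "sign_equiv I m m' \<longleftrightarrow> (\<exists>\<epsilon>. (\<epsilon> = 1 \<or> \<epsilon> = -1) \<and> fa_mon m 1 - fa_mon m' \<epsilon> \<in> I)"

lemma sign_equiv_refl: "sign_equiv (gTideal S) m m"
  unfolding sign_equiv_def by (rule exI[of _ 1]) (simp add: gT_zero)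

lemma sign_equiv_sym:
  assumes "sign_equiv (gTideal S) m m'"
  shows "sign_equiv (gTideal S) m' m"
proof -
  obtain \<epsilon> where \<epsilon>: "\<epsilon> = 1 \<or> \<epsilon> = -1" and mem: "fa_mon m 1 - fa_mon m' \<epsilon> \<in> gTideal S"
    using assms unfolding sign_equiv_def by blast
  from mem have "fa_smul (- \<epsilon>) (fa_mon m 1 - fa_mon m' \<epsilon>) \<in> gTideal S"
    by (rule gT_smul)
  moreover have "fa_smul (- \<epsilon>) (fa_mon m 1 - fa_mon m' \<epsilon>) = fa_mon m' 1 - fa_mon m \<epsilon>"
    using \<epsilon> by (auto simp: fa_smul_diff_right fa_smul_single single_uminus)
  ultimately show ?thesis
    using \<epsilon> unfolding sign_equiv_def by metis
qed

lemma sign_equiv_trans [trans]: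
  assumes "sign_equiv (gTideal S) m m'" and "sign_equiv (gTideal S) m' m''"
  shows "sign_equiv (gTideal S) m m''"
proof -
  obtain \<epsilon>1 \<epsilon>2 where \<epsilon>: "\<epsilon>1 = 1 \<or> \<epsilon>1 = -1" "\<epsilon>2 = 1 \<or> \<epsilon>2 = -1"
    and "fa_mon m 1 - fa_mon m' \<epsilon>1 \<in> gTideal S" "fa_mon m' 1 - fa_mon m'' \<epsilon>2 \<in> gTideal S"
    using assms unfolding sign_equiv_def by blast
  then have "(fa_mon m 1 - fa_mon m' \<epsilon>1) + fa_smul \<epsilon>1 (fa_mon m' 1 - fa_mon m'' \<epsilon>2) \<in> gTideal S"
    by (intro gT_add gT_smul)
  moreover have "(fa_mon m 1 - fa_mon m' \<epsilon>1) + fa_smul \<epsilon>1 (fa_mon m' 1 - fa_mon m'' \<epsilon>2) =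
      fa_mon m 1 - fa_mon m'' (\<epsilon>1 * \<epsilon>2)"
    by (simp add: fa_smul_diff_right fa_smul_single)
  moreover have "\<epsilon>1 * \<epsilon>2 = 1 \<or> \<epsilon>1 * \<epsilon>2 = -1"
    using \<epsilon> by auto
  ultimately show ?thesis
    unfolding sign_equiv_def by metis
qed

lemma sign_equiv_Mul_left:
  assumes "sign_equiv (gTideal S) u u'"
  shows "sign_equiv (gTideal S) (Mul u v) (Mul u' v)"
proof -
  obtain \<epsilon> where "\<epsilon> = 1 \<or> \<epsilon> = -1" and "fa_mon u 1 - fa_mon u' \<epsilon> \<in> gTideal S"
    using assms unfolding sign_equiv_def by blast
  moreover have "fa_mult (fa_mon u 1 - fa_mon u' \<epsilon>) (fa_mon v 1) = fa_mon (Mul u v) 1 - fa_mon (Mul u' v) \<epsilon>"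
    by (simp add: fa_mult_diff_left fa_mult_single)
  ultimately show ?thesis
    unfolding sign_equiv_def by (metis gT_multr)
qed

lemma sign_equiv_Mul_right:
  assumes "sign_equiv (gTideal S) v v'"
  shows "sign_equiv (gTideal S) (Mul u v) (Mul u v')"
proof -
  obtain \<epsilon> where "\<epsilon> = 1 \<or> \<epsilon> = -1" and "fa_mon v 1 - fa_mon v' \<epsilon> \<in> gTideal S"
    using assms unfolding sign_equiv_def by blast
  moreover have "fa_mult (fa_mon u 1) (fa_mon v 1 - fa_mon v' \<epsilon>) = fa_mon (Mul u v) 1 - fa_mon (Mul u v') \<epsilon>"
    by (simp add: fa_mult_diff_right fa_mult_single)
  ultimately show ?thesis
    unfolding sign_equiv_def by (metis gT_multl)
qed

definition mon_subst :: "(nat \<Rightarrow> mon) \<Rightarrow> nat \<Rightarrow> grp \<Rightarrow> 'a::comm_ring_1 fa" where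
  "mon_subst ms i a = (if a = mdeg (ms i) then fa_mon (ms i) 1 else 0)"

lemma graded_subst_mon_subst: "graded_subst (mon_subst ms)"
  by (auto simp: graded_subst_def mon_subst_def fa_homog_def)

lemma sign_equiv_commute: "sign_equiv (gTideal oct_gens :: 'a::comm_ring_1 fa set) (Mul u v) (Mul v u)"
proof -
  let ?\<sigma> = "mon_subst (\<lambda>i. if i = 1 then u else v) :: nat \<Rightarrow> grp \<Rightarrow> 'a fa"
  let ?comm = "fa_comm (fa_var 1 (mdeg u)) (fa_var 2 (mdeg v)) :: 'a fa"
  let ?jordan = "fa_jordan (fa_var 1 (mdeg u)) (fa_var 2 (mdeg v)) :: 'a fa"
  show ?thesis
  proof (cases "gdependent2 (mdeg u) (mdeg v)")
    case True
    then have "?comm \<in> oct_gens"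
      unfolding oct_gens_def using card_gsub_pair(1) by blast
    then have "fa_subst ?\<sigma> ?comm \<in> gTideal oct_gens"
      by (intro gT_subst gT_gen graded_subst_mon_subst)
    then show ?thesis
      unfolding sign_equiv_def
      by (intro exI[of _ 1]) (simp add: fa_comm_def fa_subst_diff fa_var_def fa_mult_single
          fa_subst_single mon_subst_def)
  next
    case False
    then have "?jordan \<in> oct_gens"
      unfolding oct_gens_def using card_gsub_pair(2) by blast
    then have "fa_subst ?\<sigma> ?jordan \<in> gTideal oct_gens"
      by (intro gT_subst gT_gen graded_subst_mon_subst)
    then show ?thesis
      unfolding sign_equiv_def
      by (intro exI[of _ "-1"]) (simp add: fa_jordan_def fa_subst_add fa_var_def fa_mult_single
          fa_subst_single mon_subst_def single_uminus)
  qed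
qed

lemma sign_equiv_assoc:
  "sign_equiv (gTideal oct_gens :: 'a::comm_ring_1 fa set) (Mul (Mul u v) w) (Mul u (Mul v w))"
proof -
  let ?\<sigma> = "mon_subst (\<lambda>i. if i = 1 then u else if i = 2 then v else w) :: nat \<Rightarrow> grp \<Rightarrow> 'a fa"
  let ?x = "\<lambda>i m. fa_var i (mdeg m) :: 'a fa"
  let ?assoc = "fa_assoc (?x 1 u) (?x 2 v) (?x 3 w)"
  let ?anti = "fa_mult (fa_mult (?x 1 u) (?x 2 v)) (?x 3 w) + fa_mult (?x 1 u) (fa_mult (?x 2 v) (?x 3 w))"
  show ?thesis
  proof (cases "gdependent3 (mdeg u) (mdeg v) (mdeg w)")
    case True
    then have "?assoc \<in> oct_gens"
      unfolding oct_gens_def using card_gsub_triple(1) by blast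
    then have "fa_subst ?\<sigma> ?assoc \<in> gTideal oct_gens"
      by (intro gT_subst gT_gen graded_subst_mon_subst)
    then show ?thesis
      unfolding sign_equiv_def
      by (intro exI[of _ 1]) (simp add: fa_assoc_def fa_subst_diff fa_var_def fa_mult_single
          fa_subst_single mon_subst_def)
  next
    case False
    then have "?anti \<in> oct_gens"
      unfolding oct_gens_def using gsub_triple_eq_UNIV by blast
    then have "fa_subst ?\<sigma> ?anti \<in> gTideal oct_gens"
      by (intro gT_subst gT_gen graded_subst_mon_subst)
    then show ?thesis
      unfolding sign_equiv_def
      by (intro exI[of _ "-1"]) (simp add: fa_subst_add fa_var_def fa_mult_single
          fa_subst_single mon_subst_def single_uminus)
  qed
qed


fun mon_vars :: "mon \<Rightarrow> (nat \<times> grp) list" where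
  "mon_vars (Var i a) = [(i, a)]"
| "mon_vars (Mul u v) = mon_vars u @ mon_vars v"

text \<open>\<open>right_comb\<close> is only applied to nonempty lists; \<open>[]\<close> is mapped to a junk value.\<close>

fun right_comb :: "(nat \<times> grp) list \<Rightarrow> mon" where
  "right_comb [] = Var 0 gzero"
| "right_comb [(i, a)] = Var i a"
| "right_comb ((i, a) # y # ys) = Mul (Var i a) (right_comb (y # ys))"

lemma mon_vars_nonempty: "mon_vars m \<noteq> []"
  by (induction m) auto

lemma sort_mon_vars_nonempty: "sort (mon_vars m) \<noteq> []"
  by (metis length_0_conv length_sort mon_vars_nonempty)

lemma right_comb_Cons: "xs \<noteq> [] \<Longrightarrow> right_comb ((i, a) # xs) = Mul (Var i a) (right_comb xs)"
  by (cases xs) auto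

lemma mon_vars_right_comb: "xs \<noteq> [] \<Longrightarrow> mon_vars (right_comb xs) = xs"
  by (induction xs rule: right_comb.induct) auto

context
  fixes S :: "'a::comm_ring_1 fa set"
  assumes commute: "\<And>u v. sign_equiv (gTideal S) (Mul u v) (Mul v u)"
    and assoc: "\<And>u v w. sign_equiv (gTideal S) (Mul (Mul u v) w) (Mul u (Mul v w))"
begin

lemma sign_equiv_insort:
  "xs \<noteq> [] \<Longrightarrow> sign_equiv (gTideal S) (Mul (Var i a) (right_comb xs)) (right_comb (insort (i, a) xs))"
proof (induction xs)
  case (Cons y ys)
  obtain j b where y: "y = (j, b)"
    by (cases y)
  show ?case
  proof (cases "(i, a) \<le> y")
    case True
    then show ?thesis
      by (simp add: right_comb_Cons sign_equiv_refl)
  next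
    case False
    then have insort: "insort (i, a) (y # ys) = y # insort (i, a) ys"
      by simp
    show ?thesis
    proof (cases "ys = []")
      case True
      then show ?thesis
        using y insort by (simp add: commute)
    next
      case False
      have "sign_equiv (gTideal S) (Mul (Var i a) (Mul (Var j b) (right_comb ys)))
          (Mul (Mul (Var i a) (Var j b)) (right_comb ys))"
        by (rule sign_equiv_sym, rule assoc)
      also have "sign_equiv (gTideal S) \<dots> (Mul (Mul (Var j b) (Var i a)) (right_comb ys))"
        by (rule sign_equiv_Mul_left, rule commute)
      also have "sign_equiv (gTideal S) \<dots> (Mul (Var j b) (Mul (Var i a) (right_comb ys)))"
        by (rule assoc)
      also have "sign_equiv (gTideal S) \<dots> (Mul (Var j b) (right_comb (insort (i, a) ys)))"
        by (rule sign_equiv_Mul_right, rule Cons.IH[OF False])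
      finally show ?thesis
        using y False insort by (simp add: right_comb_Cons)
    qed
  qed
qed simp

lemma sign_equiv_merge:
  "xs \<noteq> [] \<Longrightarrow> ys \<noteq> [] \<Longrightarrow>
   sign_equiv (gTideal S) (Mul (right_comb xs) (right_comb ys)) (right_comb (foldr insort xs ys))"
proof (induction xs)
  case (Cons x xs)
  obtain i a where x: "x = (i, a)"
    by (cases x)
  have foldr_nonempty: "foldr insort xs ys \<noteq> []"
    using Cons.prems(2) by (cases xs) auto
  show ?case
  proof (cases "xs = []")
    case True
    then show ?thesis
      using x Cons.prems sign_equiv_insort[of ys i a] by simp
  next
    case False
    have "sign_equiv (gTideal S) (Mul (Mul (Var i a) (right_comb xs)) (right_comb ys))
        (Mul (Var i a) (Mul (right_comb xs) (right_comb ys)))"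
      by (rule assoc)
    also have "sign_equiv (gTideal S) \<dots> (Mul (Var i a) (right_comb (foldr insort xs ys)))"
      by (rule sign_equiv_Mul_right, rule Cons.IH[OF False Cons.prems(2)])
    also have "sign_equiv (gTideal S) \<dots> (right_comb (insort (i, a) (foldr insort xs ys)))"
      by (rule sign_equiv_insort[OF foldr_nonempty])
    finally show ?thesis
      using x False by (simp add: right_comb_Cons)
  qed
qed simp

lemma sign_equiv_sorted_right_comb: "sign_equiv (gTideal S) m (right_comb (sort (mon_vars m)))"
proof (induction m)
  case (Var i a)
  then show ?case
    by (simp add: sign_equiv_refl)
next
  case (Mul u v)
  have "sign_equiv (gTideal S) (Mul u v) (Mul (right_comb (sort (mon_vars u))) v)"
    by (rule sign_equiv_Mul_left, rule Mul.IH(1))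
  also have "sign_equiv (gTideal S) \<dots>
      (Mul (right_comb (sort (mon_vars u))) (right_comb (sort (mon_vars v))))"
    by (rule sign_equiv_Mul_right, rule Mul.IH(2))
  also have "sign_equiv (gTideal S) \<dots> (right_comb (foldr insort (sort (mon_vars u)) (sort (mon_vars v))))"
    by (rule sign_equiv_merge) (rule sort_mon_vars_nonempty)+
  also have "foldr insort (sort (mon_vars u)) (sort (mon_vars v)) = sort (mon_vars (Mul u v))"
  proof -
    have "mset (foldr insort xs ys) = mset xs + mset ys" and "sorted ys \<Longrightarrow> sorted (foldr insort xs ys)"
      for xs ys :: "(nat \<times> grp) list"
      by (induction xs) (auto simp: sorted_insort)
    then show ?thesis
      by (intro properties_for_sort[symmetric]) simp_all
  qed
  finally show ?case .
qed

end

definition normal_mon :: "mon \<Rightarrow> bool" where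
  "normal_mon m \<longleftrightarrow> right_comb (sort (mon_vars m)) = m"

lemma normal_mon_sorted_right_comb: "normal_mon (right_comb (sort (mon_vars m)))"
  by (simp add: normal_mon_def mon_vars_right_comb[OF sort_mon_vars_nonempty] sorted_sort_id)

lemma normal_mon_eqI:
  assumes "normal_mon m" "normal_mon n" "mset (mon_vars m) = mset (mon_vars n)"
  shows "m = n"
proof -
  have "sort (mon_vars m) = sort (mon_vars n)"
    using assms(3) by (intro properties_for_sort) simp_all
  then show ?thesis
    using assms(1,2) by (metis normal_mon_def)
qed

lemma exists_normal_form:
  "\<exists>g. f - g \<in> gTideal (oct_gens :: 'a::comm_ring_1 fa set) \<and> (\<forall>m\<in>keys g. normal_mon m)"
proof -
  let ?nf = "\<lambda>m. right_comb (sort (mon_vars m))"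
  have "\<forall>m. \<exists>\<epsilon>::'a. (\<epsilon> = 1 \<or> \<epsilon> = -1) \<and> fa_mon m 1 - fa_mon (?nf m) \<epsilon> \<in> gTideal oct_gens"
    using sign_equiv_sorted_right_comb[OF sign_equiv_commute sign_equiv_assoc]
    unfolding sign_equiv_def by blast
  then obtain \<epsilon> :: "mon \<Rightarrow> 'a" where
    \<epsilon>: "\<And>m. fa_mon m 1 - fa_mon (?nf m) (\<epsilon> m) \<in> gTideal oct_gens"
    by (metis (mono_tags))
  define K where "K = keys f"
  define g where "g = (\<Sum>m\<in>K. fa_mon (?nf m) (lookup f m * \<epsilon> m))"
  have "f = (\<Sum>m\<in>K. fa_mon m (lookup f m))"
    by (simp add: K_def sum_single_lookup)
  then have "f - g = (\<Sum>m\<in>K. fa_smul (lookup f m) (fa_mon m 1 - fa_mon (?nf m) (\<epsilon> m)))"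
    by (simp add: g_def fa_smul_diff_right fa_smul_single sum_subtractf)
  then have "f - g \<in> gTideal oct_gens"
    using \<epsilon> by (auto intro!: gTideal_sum gT_smul)
  moreover have "keys g \<subseteq> (\<Union>m\<in>K. keys (fa_mon (?nf m) (lookup f m * \<epsilon> m)))"
    unfolding g_def by (rule keys_sum)
  then have "keys g \<subseteq> ?nf ` K"
    by auto
  then have "\<forall>m\<in>keys g. normal_mon m"
    using normal_mon_sorted_right_comb by blast
  ultimately show ?thesis
    by blast
qed

section \<open>Polynomial functions over an infinite domain\<close>

lemma poly_fun_eq_0_coeff:
  fixes c :: "nat \<Rightarrow> 'a::idom"
  assumes "infinite (UNIV :: 'a set)" and "\<And>s. (\<Sum>k<n. c k * s ^ k) = 0" and "k < n"
  shows "c k = 0"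
proof -
  define p where "p = (\<Sum>j<n. monom (c j) j)"
  have "poly p s = 0" for s
    using assms(2)[of s] by (simp add: p_def poly_sum poly_monom)
  then have "p = 0"
    using poly_roots_finite[of p] assms(1) by auto
  then have "coeff p k = 0"
    by simp
  moreover have "coeff p k = c k"
    using assms(3) by (simp add: p_def coeff_sum)
  ultimately show ?thesis
    by simp
qed


lemma sum_mset_split_count:
  fixes d :: "'v multiset \<Rightarrow> 'a::comm_ring_1"
  assumes "finite \<M>" and "\<And>M. M \<in> \<M> \<Longrightarrow> count M v < n"
  shows "(\<Sum>M\<in>\<M>. d M * prod_mset (image_mset t M)) =
    (\<Sum>k<n. (\<Sum>X\<in>(\<lambda>M. filter_mset (\<lambda>x. x \<noteq> v) M) ` {M\<in>\<M>. count M v = k}.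
                 d (X + replicate_mset k v) * prod_mset (image_mset t X)) * t v ^ k)"
proof -
  let ?rest = "\<lambda>M. filter_mset (\<lambda>x. x \<noteq> v) M"
  have split: "M = ?rest M + replicate_mset (count M v) v" for M
    by (rule multiset_eqI) (auto simp: count_replicate_mset)
  have "(\<Sum>M\<in>\<M>. d M * prod_mset (image_mset t M)) =
      (\<Sum>k<n. \<Sum>M\<in>{M\<in>\<M>. count M v = k}. d M * prod_mset (image_mset t M))"
    by (rule sum.group[symmetric]) (use assms in auto)
  also have "\<dots> = (\<Sum>k<n. \<Sum>M\<in>{M\<in>\<M>. count M v = k}.
      d (?rest M + replicate_mset k v) * prod_mset (image_mset t (?rest M)) * t v ^ k)"
    by (intro sum.cong refl) (subst (1 2) split, simp add: mult_ac)
  also have "\<dots> = (\<Sum>k<n. (\<Sum>X\<in>?rest ` {M\<in>\<M>. count M v = k}.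
      d (X + replicate_mset k v) * prod_mset (image_mset t X)) * t v ^ k)"
  proof (intro sum.cong refl)
    fix k
    have "inj_on ?rest {M\<in>\<M>. count M v = k}"
      by (rule inj_onI) (metis (mono_tags, lifting) mem_Collect_eq split)
    then show "(\<Sum>M\<in>{M\<in>\<M>. count M v = k}.
          d (?rest M + replicate_mset k v) * prod_mset (image_mset t (?rest M)) * t v ^ k) =
        (\<Sum>X\<in>?rest ` {M\<in>\<M>. count M v = k}. d (X + replicate_mset k v) * prod_mset (image_mset t X)) * t v ^ k"
      by (simp add: sum.reindex sum_distrib_right)
  qed
  finally show ?thesis .
qed

text \<open>A multiset \<open>M\<close> stands for the monomial \<open>\<Prod>\<^sub>x\<^sub>\<in>\<^sub>M t\<^sub>x\<close>.\<close>

lemma mset_poly_fun_eq_0_coeff: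
  fixes d :: "'v multiset \<Rightarrow> 'a::idom"
  assumes inf: "infinite (UNIV :: 'a set)" and "finite V"
  shows "finite \<M> \<Longrightarrow> (\<forall>M\<in>\<M>. set_mset M \<subseteq> V) \<Longrightarrow>
    (\<forall>t. (\<Sum>M\<in>\<M>. d M * prod_mset (image_mset t M)) = 0) \<Longrightarrow> M \<in> \<M> \<Longrightarrow> d M = 0"
  using \<open>finite V\<close>
proof (induction V arbitrary: \<M> d M rule: finite_induct)
  case empty
  then have "\<M> = {{#}}"
    by auto
  then show ?case
    using empty.prems(3,4) by simp
next
  case (insert v V)
  let ?rest = "\<lambda>M. filter_mset (\<lambda>x. x \<noteq> v) M"
  define n where "n = Suc (Max ((\<lambda>M. count M v) ` \<M> \<union> {0}))"
  have count_less: "count M v < n" if "M \<in> \<M>" for M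
    using that insert.prems(1) by (auto simp: n_def less_Suc_eq_le)
  define N where "N k = ?rest ` {M\<in>\<M>. count M v = k}" for k
  define c where "c k t = (\<Sum>X\<in>N k. d (X + replicate_mset k v) * prod_mset (image_mset t X))" for k t
  have c_upd: "c k (t(v := s)) = c k t" for k t s
  proof -
    have "image_mset (t(v := s)) X = image_mset t X" if "X \<in> N k" for X
      using that by (intro image_mset_cong) (auto simp: N_def)
    then show ?thesis
      by (simp add: c_def)
  qed
  have "c k t = 0" if "k < n" for k t
  proof (rule poly_fun_eq_0_coeff[OF inf _ that])
    fix s
    have "(\<Sum>k<n. c k t * s ^ k) = (\<Sum>k<n. c k (t(v := s)) * (t(v := s)) v ^ k)"
      by (simp add: c_upd)
    also have "\<dots> = 0"
      using sum_mset_split_count[OF insert.prems(1) count_less, of d "t(v := s)"] insert.prems(3)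
      by (simp add: c_def N_def)
    finally show "(\<Sum>k<n. c k t * s ^ k) = 0" .
  qed
  then have "d (X + replicate_mset k v) = 0" if "k < n" "X \<in> N k" for k X
    using insert.IH[where \<M> = "N k" and M = X and d = "\<lambda>X. d (X + replicate_mset k v)"] insert.prems(1,2) that
    by (auto simp: N_def c_def)
  moreover have "?rest M \<in> N (count M v)" and "M = ?rest M + replicate_mset (count M v) v"
    using insert.prems(4) by (auto simp: N_def intro!: multiset_eqI simp: count_replicate_mset)
  ultimately show ?case
    using count_less[OF insert.prems(4)] by metis
qed

lemma poly_fun_eq_0_coeff_mset:
  fixes c :: "'b \<Rightarrow> 'a::idom" and \<mu> :: "'b \<Rightarrow> 'v multiset"
  assumes "infinite (UNIV :: 'a set)" and "finite K" and "inj_on \<mu> K"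
    and "\<And>t. (\<Sum>k\<in>K. c k * prod_mset (image_mset t (\<mu> k))) = 0" and "k \<in> K"
  shows "c k = 0"
proof -
  let ?d = "\<lambda>M. c (the_inv_into K \<mu> M)"
  have "(\<Sum>M\<in>\<mu> ` K. ?d M * prod_mset (image_mset t M)) = 0" for t
    using assms(3,4) by (simp add: sum.reindex the_inv_into_f_f)
  then have "?d (\<mu> k) = 0"
    using mset_poly_fun_eq_0_coeff[OF assms(1), of "\<Union>M\<in>\<mu> ` K. set_mset M" "\<mu> ` K" ?d] assms(2,5)
    by auto
  then show ?thesis
    using assms(3,5) by (simp add: the_inv_into_f_f)
qed

section \<open>Completeness\<close>

definition oct_coord :: "grp \<Rightarrow> 'a::comm_ring_1 oct \<Rightarrow> 'a" where
  "oct_coord g x = (let y = (if snd (snd g) then snd x else fst x);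
                        z = (if fst (snd g) then snd y else fst y) in if fst g then snd z else fst z)"

lemma oct_coord_sum: "oct_coord g (\<Sum>i\<in>A. f i) = (\<Sum>i\<in>A. oct_coord g (f i :: 'a::comm_ring_1 oct))"
  by (induction A rule: infinite_finite_induct) (auto simp: oct_coord_def Let_def)

lemma oct_coord_smul_basis:
  "oct_coord g (oct_smul s (oct_basis h)) = (if g = h then s else (0::'a::comm_ring_1))"
  by (cases g rule: prod_cases3; cases h rule: prod_cases3)
     (auto simp: oct_coord_def Let_def oct_basis_def basis2_def basis1_def oct_defs)

fun mon_const :: "'a::comm_ring_1 \<Rightarrow> 'a \<Rightarrow> 'a \<Rightarrow> mon \<Rightarrow> 'a" where
  "mon_const \<alpha> \<beta> \<gamma> (Var i a) = 1"
| "mon_const \<alpha> \<beta> \<gamma> (Mul u v) = mon_const \<alpha> \<beta> \<gamma> u * mon_const \<alpha> \<beta> \<gamma> v * oct_const \<alpha> \<beta> \<gamma> (mdeg u) (mdeg v)"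

lemma mon_const_nonzero:
  "\<alpha> \<noteq> 0 \<Longrightarrow> \<beta> \<noteq> 0 \<Longrightarrow> \<gamma> \<noteq> 0 \<Longrightarrow> mon_const \<alpha> \<beta> \<gamma> m \<noteq> (0::'a::idom)"
  by (induction m) (simp_all add: oct_const_nonzero)

lemma oct_meval_generic:
  "oct_meval \<alpha> \<beta> \<gamma> (\<lambda>i a. oct_smul (t (i, a)) (oct_basis a)) m =
   oct_smul (mon_const \<alpha> \<beta> \<gamma> m * prod_mset (image_mset t (mset (mon_vars m))))
     (oct_basis (mdeg m) :: 'a::comm_ring_1 oct)"
  by (induction m) (simp_all add: oct_mult_smul oct_basis_mult oct_smul_smul mult_ac)

lemma oct_identity_normal_eq_0:
  fixes g :: "'a::idom fa"
  assumes inf: "infinite (UNIV :: 'a set)" and nz: "\<alpha> \<noteq> 0" "\<beta> \<noteq> 0" "\<gamma> \<noteq> 0"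
    and "g \<in> oct_TG \<alpha> \<beta> \<gamma>" and normal: "\<forall>m\<in>keys g. normal_mon m"
  shows "g = 0"
proof (rule ccontr)
  assume "g \<noteq> 0"
  then obtain m where m: "m \<in> keys g"
    by (metis all_not_in_conv keys_eq_empty)
  let ?K = "{n \<in> keys g. mdeg n = mdeg m}"
  define c where "c n = lookup g n * mon_const \<alpha> \<beta> \<gamma> n" for n
  have "(\<Sum>n\<in>?K. c n * prod_mset (image_mset t (mset (mon_vars n)))) = 0" for t
  proof -
    let ?\<phi> = "\<lambda>i a. oct_smul (t (i, a)) (oct_basis a) :: 'a oct"
    have "\<forall>i a. ?\<phi> i a \<in> oct_comp a"
      by (auto simp: oct_comp_iff)
    then have "oct_eval \<alpha> \<beta> \<gamma> ?\<phi> g = 0"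
      using assms(5) by (simp add: oct_TG_def)
    then have "0 = oct_coord (mdeg m) (oct_eval \<alpha> \<beta> \<gamma> ?\<phi> g)"
      by (simp add: oct_coord_def)
    also have "\<dots> = (\<Sum>n\<in>keys g. if mdeg n = mdeg m then c n * prod_mset (image_mset t (mset (mon_vars n))) else 0)"
      by (auto simp: oct_eval_def oct_coord_sum oct_meval_generic oct_smul_smul oct_coord_smul_basis
          c_def mult_ac intro!: sum.cong)
    also have "\<dots> = (\<Sum>n\<in>?K. c n * prod_mset (image_mset t (mset (mon_vars n))))"
      by (simp add: sum.inter_filter)
    finally show ?thesis ..
  qed
  moreover have "inj_on (\<lambda>n. mset (mon_vars n)) ?K"
    using normal normal_mon_eqI by (auto intro: inj_onI)
  ultimately have "c m = 0"
    using poly_fun_eq_0_coeff_mset[OF inf, of ?K] m by auto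
  then show False
    using m mon_const_nonzero[OF nz] by (simp add: c_def in_keys_iff)
qed

lemma oct_TG_subset_gTideal:
  fixes \<alpha> \<beta> \<gamma> :: "'a::idom"
  assumes "infinite (UNIV :: 'a set)" and "\<alpha> \<noteq> 0" "\<beta> \<noteq> 0" "\<gamma> \<noteq> 0"
  shows "oct_TG \<alpha> \<beta> \<gamma> \<subseteq> gTideal oct_gens"
proof
  fix f assume f: "f \<in> oct_TG \<alpha> \<beta> \<gamma>"
  obtain g where fg: "f - g \<in> gTideal oct_gens" and normal: "\<forall>m\<in>keys g. normal_mon m"
    using exists_normal_form by blast
  have "f - g \<in> oct_TG \<alpha> \<beta> \<gamma>"
    using fg gTideal_oct_gens_subset by blast
  then have "g \<in> oct_TG \<alpha> \<beta> \<gamma>"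
    using f by (auto simp: oct_TG_def oct_eval_diff)
  then have "g = 0"
    using oct_identity_normal_eq_0[OF assms] normal by blast
  then show "f \<in> gTideal oct_gens"
    using fg by simp
qed

theorem mainTheorem2:
  fixes \<alpha> \<beta> \<gamma> :: "'a::idom"
  assumes "infinite (UNIV :: 'a set)"
    and "(2::'a) \<noteq> 0"
    and "\<alpha> \<noteq> 0" and "\<beta> \<noteq> 0" and "\<gamma> \<noteq> 0"
  shows "oct_TG \<alpha> \<beta> \<gamma> = gTideal (oct_gens :: 'a fa set)"
  using oct_TG_subset_gTideal[OF assms(1,3-5)] gTideal_oct_gens_subset by (rule subset_antisym)

end
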